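(* Let $\delta\in[0,1/2]$ satisfy $H(\delta)<1/3$. Then there exist arbitrarily long binary linear $3$-CIS codes of rate $1/3$ with relative minimum distance at least $\delta$; more precisely, for all sufficiently large $k$ there is a binary linear $3$-CIS $[3k,k]$ code of minimum distance at least $3\delta k$.
   Context: $H(x)=-x\log_2x-(1-x)\log_2(1-x)$ is the binary entropy function. A binary linear $[3k,k]$ code is $3$-CIS if its coordinate set can be partitioned into $3$ pairwise disjoint information sets, an information set being a set of $k$ coordinates whose columns in a generator matrix are linearly independent. *)

theory Defs
  imports Complex_Main
begin

text \<open>Binary entropy function. Note: in Isabelle, log 2 0 = 0, so H 0 = H 1 = 0,
  matching the usual convention 0 log 0 = 0.\<close>
definition H :: "real \<Rightarrow> real" where
  "H x = - x * log 2 x - (1 - x) * log 2 (1 - x)"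

text \<open>Binary vectors over GF(2) are represented as bool-valued functions; a k x n
  matrix G over GF(2) is a function nat => nat => bool (entry in row i, column j),
  only the entries with i < k, j < n being relevant.\<close>
definition row_comb :: "(nat \<Rightarrow> nat \<Rightarrow> bool) \<Rightarrow> nat set \<Rightarrow> nat \<Rightarrow> bool" where
  "row_comb G S j = odd (card {i \<in> S. G i j})"

definition rows_independent :: "(nat \<Rightarrow> nat \<Rightarrow> bool) \<Rightarrow> nat \<Rightarrow> nat \<Rightarrow> bool" where
  "rows_independent G k n \<longleftrightarrow>
     (\<forall>S \<subseteq> {..<k}. (\<forall>j<n. \<not> row_comb G S j) \<longrightarrow> S = {})"

definition generator_matrix :: "(nat \<Rightarrow> nat \<Rightarrow> bool) \<Rightarrow> nat \<Rightarrow> nat \<Rightarrow> bool" where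
  "generator_matrix G k n \<longleftrightarrow> rows_independent G k n"

definition code :: "(nat \<Rightarrow> nat \<Rightarrow> bool) \<Rightarrow> nat \<Rightarrow> nat \<Rightarrow> (nat \<Rightarrow> bool) set" where
  "code G k n = {(\<lambda>j. j < n \<and> row_comb G S j) | S. S \<subseteq> {..<k}}"

definition cols_independent :: "(nat \<Rightarrow> nat \<Rightarrow> bool) \<Rightarrow> nat \<Rightarrow> nat set \<Rightarrow> bool" where
  "cols_independent G k I \<longleftrightarrow>
     (\<forall>T \<subseteq> I. (\<forall>i<k. \<not> odd (card {j \<in> T. G i j})) \<longrightarrow> T = {})"

definition information_set :: "(nat \<Rightarrow> nat \<Rightarrow> bool) \<Rightarrow> nat \<Rightarrow> nat \<Rightarrow> nat set \<Rightarrow> bool" where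
  "information_set G k n I \<longleftrightarrow> I \<subseteq> {..<n} \<and> card I = k \<and> cols_independent G k I"

definition three_CIS :: "(nat \<Rightarrow> nat \<Rightarrow> bool) \<Rightarrow> nat \<Rightarrow> nat \<Rightarrow> bool" where
  "three_CIS G k n \<longleftrightarrow>
     (\<exists>I1 I2 I3. I1 \<union> I2 \<union> I3 = {..<n} \<and> I1 \<inter> I2 = {} \<and> I1 \<inter> I3 = {} \<and> I2 \<inter> I3 = {}
        \<and> information_set G k n I1 \<and> information_set G k n I2 \<and> information_set G k n I3)"

definition hamming_dist :: "nat \<Rightarrow> (nat \<Rightarrow> bool) \<Rightarrow> (nat \<Rightarrow> bool) \<Rightarrow> nat" where
  "hamming_dist n x y = card {j \<in> {..<n}. x j \<noteq> y j}"

definition min_dist_ge :: "(nat \<Rightarrow> bool) set \<Rightarrow> nat \<Rightarrow> real \<Rightarrow> bool" where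
  "min_dist_ge C n d \<longleftrightarrow> (\<forall>x\<in>C. \<forall>y\<in>C. x \<noteq> y \<longrightarrow> d \<le> real (hamming_dist n x y))"

end

theory Submission
  imports Defs "HOL-Library.FuncSet"
begin

text \<open>Take the generator matrix [I | I + U | I + L] with U strictly upper and L strictly lower
  triangular. Each block is unitriangular, so the three blocks of coordinates are disjoint
  information sets. Now choose U and L uniformly at random and fix a nonzero message S containing p.
  For every column index j other than p, column j of U (if p < j) or of L (if p > j) has a free
  entry in row p, so the corresponding codeword bit is a fair coin, independently over j. Hence the
  expectation of x ^ wt S is at most x ^ card S * ((1 + x) / 2) ^ (k - 1), and by the exponential
  Markov inequality with x = 1/10 the expected number of nonzero messages of weight below d is at
  most 10 ^ d * (11/10) ^ k * (11/20) ^ (k - 1), which tends to 0 uniformly in d <= k/5.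
  Finally H \<delta> < 1/3 forces \<delta> < 1/15, that is 3 \<delta> k <= k/5.\<close>

lemma H_has_real_derivative:
  assumes "0 < x" "x < 1"
  shows "(H has_real_derivative (log 2 (1 - x) - log 2 x)) (at x)"
proof -
  have "((\<lambda>x. - x * log 2 x - (1 - x) * log 2 (1 - x)) has_real_derivative
     (- (1 * log 2 x + x * (1 / (ln 2 * x))) - ((-1) * log 2 (1 - x) + (1 - x) * ((-1) / (ln 2 * (1 - x)))))) (at x)"
    using assms by (auto intro!: derivative_eq_intros)
  moreover have "- (1 * log 2 x + x * (1 / (ln 2 * x))) - ((-1) * log 2 (1 - x) + (1 - x) * ((-1) / (ln 2 * (1 - x))))
      = log 2 (1 - x) - log 2 x"
    using assms by (simp add: field_simps)
  ultimately show ?thesis unfolding H_def[abs_def] by simp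
qed

lemma H_mono:
  assumes "0 < a" "a \<le> b" "b \<le> 1/2"
  shows "H a \<le> H b"
proof (rule DERIV_nonneg_imp_increasing_open[OF assms(2)])
  fix x assume x: "a < x" "x < b"
  have "log 2 x \<le> log 2 (1 - x)" using x assms by simp
  then show "\<exists>y. DERIV H x :> y \<and> 0 \<le> y"
    using H_has_real_derivative[of x] x assms by (intro exI[of _ "log 2 (1 - x) - log 2 x"]) auto
next
  show "continuous_on {a..b} H"
  proof (rule continuous_at_imp_continuous_on, safe)
    fix x assume "x \<in> {a..b}"
    then show "isCont H x" using H_has_real_derivative[of x] assms by (intro DERIV_isCont) auto
  qed
qed

lemma ln_2_le: "ln (2::real) \<le> 5/6"
proof -
  have "ln (4/3::real) + ln (3/2) = ln (4/3 * (3/2))" by (subst ln_mult) auto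
  then have "ln (2::real) = ln (4/3) + ln (3/2)" by simp
  also have "\<dots> \<le> (4/3 - 1) + (3/2 - 1)" by (intro add_mono ln_le_minus_one) auto
  finally show ?thesis by simp
qed

lemma H_one_fifteenth_ge: "1/3 \<le> H (1/15)"
proof -
  have "1/15 \<le> ln (15/14::real)"
    using ln_le_minus_one[of "14/15::real"] by (simp add: ln_div)
  moreover have "ln (16/15::real) \<le> 1/15"
    using ln_le_minus_one[of "16/15::real"] by simp
  moreover have "ln (16::real) = 4 * ln 2"
    using ln_realpow[of 2 4] by simp
  moreover have "ln (15::real) = ln 16 - ln (16/15)" by (simp add: ln_div)
  ultimately have "ln 2 / 3 \<le> (1/15) * ln (15::real) + (14/15) * ln (15/14)"
    using ln_2_le by linarith
  moreover have "H (1/15) = ((1/15) * ln 15 + (14/15) * ln (15/14)) / ln 2"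
    unfolding H_def log_def by (simp add: ln_div field_simps)
  ultimately show ?thesis
    using divide_right_mono[of "ln 2 / 3" "(1/15) * ln (15::real) + (14/15) * ln (15/14)" "ln 2"]
    by simp
qed

lemma less_one_fifteenth_if_H_less:
  assumes "0 \<le> \<delta>" "\<delta> \<le> 1/2" "H \<delta> < 1/3"
  shows "\<delta> < 1/15"
proof (rule ccontr)
  assume "\<not> \<delta> < 1/15"
  then have "H (1/15) \<le> H \<delta>" using assms by (intro H_mono) auto
  with H_one_fifteenth_ge assms(3) show False by simp
qed

lemma sum_Pow_parity:
  fixes f :: "bool \<Rightarrow> 'a::comm_semiring_1"
  assumes "finite R" "t \<in> S" "t \<in> R"
  shows "(\<Sum>c\<in>Pow R. f (odd (card (S \<inter> c)))) = 2 ^ (card R - 1) * (f True + f False)"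
proof -
  define R' where "R' = R - {t}"
  have R': "R = insert t R'" "t \<notin> R'" "finite R'" "card R' = card R - 1"
    using assms unfolding R'_def by auto
  have flip: "odd (card (S \<inter> insert t c)) \<longleftrightarrow> \<not> odd (card (S \<inter> c))" if "c \<in> Pow R'" for c
  proof -
    have "finite c" "t \<notin> c" using that R' finite_subset by auto
    moreover have "S \<inter> insert t c = insert t (S \<inter> c)" using assms(2) by auto
    ultimately show ?thesis by simp
  qed
  have pair: "f b + f (\<not> b) = f True + f False" for b by (cases b) (simp_all add: add.commute)
  have "(\<Sum>c\<in>Pow R. f (odd (card (S \<inter> c))))
      = (\<Sum>c\<in>Pow R'. f (odd (card (S \<inter> c)))) + (\<Sum>c\<in>insert t ` Pow R'. f (odd (card (S \<inter> c))))"
    unfolding R'(1) Pow_insert by (rule sum.union_disjoint) (use R' in auto)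
  also have "(\<Sum>c\<in>insert t ` Pow R'. f (odd (card (S \<inter> c)))) = (\<Sum>c\<in>Pow R'. f (\<not> odd (card (S \<inter> c))))"
  proof -
    have "inj_on (insert t) (Pow R')"
      using R'(2) unfolding inj_on_def by (metis Pow_iff insert_ident subsetD)
    then show ?thesis using flip by (simp add: sum.reindex)
  qed
  also have "(\<Sum>c\<in>Pow R'. f (odd (card (S \<inter> c)))) + (\<Sum>c\<in>Pow R'. f (\<not> odd (card (S \<inter> c))))
      = (\<Sum>c\<in>Pow R'. f True + f False)"
    by (simp only: sum.distrib[symmetric] pair)
  also have "\<dots> = 2 ^ (card R - 1) * (f True + f False)"
    using R' by (simp add: card_Pow)
  finally show ?thesis .
qed

lemma sum_Pow_parity_power_le:
  fixes x :: real
  assumes "finite R" "0 \<le> x" "x \<le> 1"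
  shows "(\<Sum>c\<in>Pow R. x ^ of_bool (a \<noteq> odd (card (S \<inter> c))))
          \<le> 2 ^ card R * (if S \<inter> R = {} then 1 else (1 + x) / 2)"
proof (cases "S \<inter> R = {}")
  case True
  have "(\<Sum>c\<in>Pow R. x ^ of_bool (a \<noteq> odd (card (S \<inter> c)))) \<le> (\<Sum>c\<in>Pow R. 1)"
    using assms by (intro sum_mono) (simp add: power_le_one)
  also have "\<dots> = 2 ^ card R" using assms(1) by (simp add: card_Pow)
  finally show ?thesis using True by simp
next
  case False
  then obtain t where t: "t \<in> S" "t \<in> R" by blast
  then have "card R \<noteq> 0" using assms(1) by auto
  then have "(2::real) ^ (card R - 1) = 2 ^ card R / 2"
    using power_diff[of "2::real" 1 "card R"] by simp
  moreover have "(\<Sum>c\<in>Pow R. x ^ of_bool (a \<noteq> odd (card (S \<inter> c)))) = 2 ^ (card R - 1) * (1 + x)"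
    using sum_Pow_parity[OF assms(1) t, of "\<lambda>b. x ^ of_bool (a \<noteq> b)"]
    by (cases a) (simp_all add: add.commute)
  ultimately have "(\<Sum>c\<in>Pow R. x ^ of_bool (a \<noteq> odd (card (S \<inter> c)))) = 2 ^ card R * ((1 + x) / 2)"
    by simp
  with False show ?thesis by simp
qed

definition triangular_choices :: "nat \<Rightarrow> (nat \<Rightarrow> nat set \<times> nat set) set" where
  "triangular_choices k = PiE {..<k} (\<lambda>j. Pow {..<j} \<times> Pow {j<..<k})"

text \<open>The matrix \<open>[I | I + U | I + L]\<close>, where \<open>fst (P j)\<close> and \<open>snd (P j)\<close> are the supports of
  column \<open>j\<close> of \<open>U\<close> and of \<open>L\<close>.\<close>
definition triangular_generator :: "nat \<Rightarrow> (nat \<Rightarrow> nat set \<times> nat set) \<Rightarrow> nat \<Rightarrow> nat \<Rightarrow> bool" where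
  "triangular_generator k P i j =
     (if j < k then i = j
      else if j < 2*k then i = j - k \<or> i \<in> fst (P (j - k))
      else i = j - 2*k \<or> i \<in> snd (P (j - 2*k)))"

lemma triangular_choicesD:
  assumes "P \<in> triangular_choices k" "j < k"
  shows "fst (P j) \<subseteq> {..<j}" "snd (P j) \<subseteq> {j<..<k}"
proof -
  have "P j \<in> Pow {..<j} \<times> Pow {j<..<k}"
    using assms unfolding triangular_choices_def by auto
  then show "fst (P j) \<subseteq> {..<j}" "snd (P j) \<subseteq> {j<..<k}" by (auto simp: mem_Times_iff)
qed

lemma odd_card_insert_parity:
  assumes "finite S" "j \<notin> c"
  shows "odd (card {i\<in>S. i = j \<or> i \<in> c}) \<longleftrightarrow> (j \<in> S) \<noteq> odd (card (S \<inter> c))"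
proof (cases "j \<in> S")
  case True
  then have "{i\<in>S. i = j \<or> i \<in> c} = insert j (S \<inter> c)" by auto
  then show ?thesis using True assms by auto
next
  case False
  then have "{i\<in>S. i = j \<or> i \<in> c} = S \<inter> c" by auto
  then show ?thesis using False by auto
qed

lemma row_comb_triangular_generator:
  assumes "P \<in> triangular_choices k" "j < k" "finite S"
  shows "row_comb (triangular_generator k P) S j \<longleftrightarrow> j \<in> S"
    and "row_comb (triangular_generator k P) S (k + j) \<longleftrightarrow> (j \<in> S) \<noteq> odd (card (S \<inter> fst (P j)))"
    and "row_comb (triangular_generator k P) S (2*k + j) \<longleftrightarrow> (j \<in> S) \<noteq> odd (card (S \<inter> snd (P j)))"
proof -
  have identity: "{i\<in>S. triangular_generator k P i j} = S \<inter> {j}"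
    using assms unfolding triangular_generator_def by auto
  show "row_comb (triangular_generator k P) S j \<longleftrightarrow> j \<in> S"
    unfolding row_comb_def identity by (cases "j \<in> S") auto
  have "{i\<in>S. triangular_generator k P i (k + j)} = {i\<in>S. i = j \<or> i \<in> fst (P j)}"
    using assms unfolding triangular_generator_def by auto
  moreover have "j \<notin> fst (P j)" using triangular_choicesD[OF assms(1,2)] by auto
  ultimately show "row_comb (triangular_generator k P) S (k + j) \<longleftrightarrow> (j \<in> S) \<noteq> odd (card (S \<inter> fst (P j)))"
    unfolding row_comb_def using odd_card_insert_parity[OF assms(3)] by simp
  have "{i\<in>S. triangular_generator k P i (2*k + j)} = {i\<in>S. i = j \<or> i \<in> snd (P j)}"
    using assms unfolding triangular_generator_def by auto
  moreover have "j \<notin> snd (P j)" using triangular_choicesD[OF assms(1,2)] by auto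
  ultimately show "row_comb (triangular_generator k P) S (2*k + j) \<longleftrightarrow> (j \<in> S) \<noteq> odd (card (S \<inter> snd (P j)))"
    unfolding row_comb_def using odd_card_insert_parity[OF assms(3)] by simp
qed

lemma generator_matrix_triangular_generator:
  assumes "P \<in> triangular_choices k"
  shows "generator_matrix (triangular_generator k P) k (3*k)"
  unfolding generator_matrix_def rows_independent_def
proof (intro allI impI)
  fix S assume S: "S \<subseteq> {..<k}" and zero: "\<forall>j<3*k. \<not> row_comb (triangular_generator k P) S j"
  show "S = {}"
  proof (rule ccontr)
    assume "S \<noteq> {}"
    then obtain i where "i \<in> S" by blast
    moreover have "i < k" "finite S" using S \<open>i \<in> S\<close> finite_subset by auto
    ultimately have "row_comb (triangular_generator k P) S i"
      using row_comb_triangular_generator(1)[OF assms] by blast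
    moreover have "i < 3*k" using \<open>i < k\<close> by simp
    ultimately show False using zero by blast
  qed
qed

text \<open>The column of least rank in a dependent set would be alone in its pivot row.\<close>
lemma cols_independent_if_triangular:
  fixes \<pi> \<rho> :: "nat \<Rightarrow> nat"
  assumes pivot: "\<And>j. j \<in> I \<Longrightarrow> \<pi> j < k \<and> G (\<pi> j) j"
    and triangular: "\<And>i j. i \<in> I \<Longrightarrow> j \<in> I \<Longrightarrow> G (\<pi> i) j \<Longrightarrow> i \<noteq> j \<Longrightarrow> \<rho> j < \<rho> i"
  shows "cols_independent G k I"
  unfolding cols_independent_def
proof (intro allI impI)
  fix T assume T: "T \<subseteq> I" and even: "\<forall>i<k. \<not> odd (card {j \<in> T. G i j})"
  show "T = {}"
  proof (rule ccontr)
    assume "T \<noteq> {}"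
    then obtain m where m: "m \<in> T" "\<forall>j. j \<in> T \<longrightarrow> \<rho> m \<le> \<rho> j"
      using ex_has_least_nat[of "\<lambda>j. j \<in> T"] by blast
    have "{j \<in> T. G (\<pi> m) j} = {m}"
    proof (intro equalityI subsetI)
      fix j assume "j \<in> {j \<in> T. G (\<pi> m) j}"
      then show "j \<in> {m}"
        using m T triangular[of m j] by (auto simp: not_less[symmetric])
    qed (use m T pivot in auto)
    moreover have "\<pi> m < k" using pivot m T by blast
    ultimately show False using even by auto
  qed
qed

lemma three_CIS_triangular_generator:
  assumes "P \<in> triangular_choices k"
  shows "three_CIS (triangular_generator k P) k (3*k)"
  unfolding three_CIS_def
proof (intro exI conjI)
  let ?G = "triangular_generator k P"
  show "{..<k} \<union> {k..<2*k} \<union> {2*k..<3*k} = {..<3*k}" by auto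
  show "{..<k} \<inter> {k..<2*k} = {}" "{..<k} \<inter> {2*k..<3*k} = {}" "{k..<2*k} \<inter> {2*k..<3*k} = {}"
    by auto
  have "cols_independent ?G k {..<k}"
    by (rule cols_independent_if_triangular[where \<pi> = id and \<rho> = id])
      (auto simp: triangular_generator_def)
  then show "information_set ?G k (3*k) {..<k}"
    unfolding information_set_def by auto
  have "cols_independent ?G k {k..<2*k}"
  proof (rule cols_independent_if_triangular[where \<pi> = "\<lambda>j. j - k" and \<rho> = "\<lambda>j. 2*k - j"])
    fix i j assume ij: "i \<in> {k..<2*k}" "j \<in> {k..<2*k}" "?G (i - k) j" "i \<noteq> j"
    then have "i - k \<in> fst (P (j - k))" unfolding triangular_generator_def by auto
    moreover have "fst (P (j - k)) \<subseteq> {..<j - k}"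
      using ij(2) by (intro triangular_choicesD(1)[OF assms]) auto
    ultimately have "i - k < j - k" by auto
    then show "2*k - j < 2*k - i" using ij(1,2) by auto
  qed (auto simp: triangular_generator_def)
  then show "information_set ?G k (3*k) {k..<2*k}"
    unfolding information_set_def by auto
  have "cols_independent ?G k {2*k..<3*k}"
  proof (rule cols_independent_if_triangular[where \<pi> = "\<lambda>j. j - 2*k" and \<rho> = id])
    fix i j assume ij: "i \<in> {2*k..<3*k}" "j \<in> {2*k..<3*k}" "?G (i - 2*k) j" "i \<noteq> j"
    then have "i - 2*k \<in> snd (P (j - 2*k))" unfolding triangular_generator_def by auto
    moreover have "snd (P (j - 2*k)) \<subseteq> {j - 2*k<..<k}"
      using ij(2) by (intro triangular_choicesD(2)[OF assms]) auto
    ultimately have "j - 2*k < i - 2*k" by auto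
    then show "id j < id i" using ij(1,2) by auto
  qed (auto simp: triangular_generator_def)
  then show "information_set ?G k (3*k) {2*k..<3*k}"
    unfolding information_set_def by auto
qed

definition message_weight :: "nat \<Rightarrow> (nat \<Rightarrow> nat set \<times> nat set) \<Rightarrow> nat set \<Rightarrow> nat" where
  "message_weight k P S = card {j \<in> {..<3*k}. row_comb (triangular_generator k P) S j}"

definition light_messages :: "nat \<Rightarrow> (nat \<Rightarrow> nat set \<times> nat set) \<Rightarrow> real \<Rightarrow> nat set set" where
  "light_messages k P d = {S \<in> Pow {..<k}. S \<noteq> {} \<and> real (message_weight k P S) < d}"

lemma odd_card_Diff_Un_Diff:
  assumes "finite A" "finite B"
  shows "odd (card ((A - B) \<union> (B - A))) \<longleftrightarrow> odd (card A) \<noteq> odd (card B)"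
proof -
  have "card ((A - B) \<union> (B - A)) = card (A - B) + card (B - A)"
    using assms by (intro card_Un_disjoint) auto
  moreover have "card A = card (A \<inter> B) + card (A - B)" "card B = card (B \<inter> A) + card (B - A)"
    using assms by (simp_all add: card_Int_Diff)
  ultimately show ?thesis by (auto simp: Int_commute)
qed

lemma row_comb_Diff_Un_Diff:
  assumes "finite S" "finite S'"
  shows "row_comb G ((S - S') \<union> (S' - S)) j \<longleftrightarrow> row_comb G S j \<noteq> row_comb G S' j"
proof -
  have "{i \<in> (S - S') \<union> (S' - S). G i j}
      = ({i\<in>S. G i j} - {i\<in>S'. G i j}) \<union> ({i\<in>S'. G i j} - {i\<in>S. G i j})"
    by auto
  then show ?thesis
    unfolding row_comb_def using odd_card_Diff_Un_Diff[of "{i\<in>S. G i j}" "{i\<in>S'. G i j}"] assms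
    by simp
qed

lemma min_dist_ge_if_no_light_messages:
  assumes "light_messages k P d = {}"
  shows "min_dist_ge (code (triangular_generator k P) k (3*k)) (3*k) d"
  unfolding min_dist_ge_def
proof (intro ballI impI)
  let ?G = "triangular_generator k P"
  fix x y assume x: "x \<in> code ?G k (3*k)" and y: "y \<in> code ?G k (3*k)" and "x \<noteq> y"
  obtain S where S: "S \<subseteq> {..<k}" "x = (\<lambda>j. j < 3*k \<and> row_comb ?G S j)"
    using x unfolding code_def by auto
  obtain S' where S': "S' \<subseteq> {..<k}" "y = (\<lambda>j. j < 3*k \<and> row_comb ?G S' j)"
    using y unfolding code_def by auto
  have finite: "finite S" "finite S'" using S S' finite_subset by auto
  define T where "T = (S - S') \<union> (S' - S)"
  have "T \<in> Pow {..<k}" "T \<noteq> {}"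
    using S S' \<open>x \<noteq> y\<close> unfolding T_def by auto
  then have "\<not> real (message_weight k P T) < d"
    using assms unfolding light_messages_def by auto
  moreover have "hamming_dist (3*k) x y = message_weight k P T"
    unfolding hamming_dist_def message_weight_def T_def S(2) S'(2)
    using row_comb_Diff_Un_Diff[OF finite] by (intro arg_cong[where f = card]) auto
  ultimately show "d \<le> real (hamming_dist (3*k) x y)" by simp
qed

lemma prod_lessThan_three_blocks:
  fixes f :: "nat \<Rightarrow> 'a::comm_monoid_mult"
  shows "prod f {..<3*k} = prod f {..<k} * prod (\<lambda>j. f (k + j)) {..<k} * prod (\<lambda>j. f (2*k + j)) {..<k}"
proof -
  have "prod f {..<3*k} = prod f {0..<k} * prod f {k..<2*k} * prod f {2*k..<3*k}"
    by (simp add: prod.atLeastLessThan_concat lessThan_atLeast0)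
  also have "prod f {k..<2*k} = prod (\<lambda>j. f (k + j)) {0..<k}"
    using prod.shift_bounds_nat_ivl[of f 0 k k] by (simp add: mult_2 add.commute)
  also have "prod f {2*k..<3*k} = prod (\<lambda>j. f (2*k + j)) {0..<k}"
    using prod.shift_bounds_nat_ivl[of f 0 "2*k" k] by (simp add: add.commute)
  finally show ?thesis by (simp add: lessThan_atLeast0)
qed

lemma power_card_eq_prod:
  fixes x :: "'a::comm_monoid_mult"
  assumes "finite A"
  shows "x ^ card {j \<in> A. Q j} = (\<Prod>j\<in>A. x ^ of_bool (Q j))"
  using assms by (simp add: power_sum[symmetric] Collect_conj_eq Int_commute)

lemma power_message_weight:
  fixes x :: "'a::comm_monoid_mult"
  assumes "P \<in> triangular_choices k" "S \<subseteq> {..<k}"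
  shows "x ^ message_weight k P S = x ^ card S *
    (\<Prod>j<k. x ^ of_bool ((j \<in> S) \<noteq> odd (card (S \<inter> fst (P j))))
           * x ^ of_bool ((j \<in> S) \<noteq> odd (card (S \<inter> snd (P j)))))"
proof -
  let ?c = "\<lambda>j. x ^ of_bool (row_comb (triangular_generator k P) S j)"
  have finite: "finite S" using assms(2) finite_subset by blast
  have "x ^ message_weight k P S = (\<Prod>j<3*k. ?c j)"
    unfolding message_weight_def by (rule power_card_eq_prod) simp
  also have "\<dots> = (\<Prod>j<k. ?c j) * (\<Prod>j<k. ?c (k + j)) * (\<Prod>j<k. ?c (2*k + j))"
    by (rule prod_lessThan_three_blocks)
  also have "(\<Prod>j<k. ?c j) = (\<Prod>j<k. x ^ of_bool (j \<in> S))"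
    using row_comb_triangular_generator(1)[OF assms(1) _ finite] by simp
  also have "\<dots> = x ^ card {j \<in> {..<k}. j \<in> S}"
    by (rule power_card_eq_prod[symmetric]) simp
  also have "{j \<in> {..<k}. j \<in> S} = S" using assms(2) by auto
  also have "(\<Prod>j<k. ?c (k + j)) = (\<Prod>j<k. x ^ of_bool ((j \<in> S) \<noteq> odd (card (S \<inter> fst (P j)))))"
    using row_comb_triangular_generator(2)[OF assms(1) _ finite] by simp
  also have "(\<Prod>j<k. ?c (2*k + j)) = (\<Prod>j<k. x ^ of_bool ((j \<in> S) \<noteq> odd (card (S \<inter> snd (P j)))))"
    using row_comb_triangular_generator(3)[OF assms(1) _ finite] by simp
  finally show ?thesis by (simp add: prod.distrib mult.assoc)
qed

lemma sum_power_message_weight_le: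
  fixes x :: real
  assumes "S \<subseteq> {..<k}" "S \<noteq> {}" "0 \<le> x" "x \<le> 1"
  shows "(\<Sum>P\<in>triangular_choices k. x ^ message_weight k P S)
           \<le> card (triangular_choices k) * x ^ card S * ((1 + x) / 2) ^ (k - 1)"
proof -
  obtain p where "p \<in> S" using assms(2) by blast
  then have "p < k" using assms(1) by blast
  define c where "c = (1 + x) / 2"
  define \<phi> where "\<phi> j C = x ^ of_bool ((j \<in> S) \<noteq> odd (card (S \<inter> C)))" for j C
  define B where "B j = Pow {..<j} \<times> Pow {j<..<k}" for j
  have c: "0 \<le> c" "c \<le> 1" using assms unfolding c_def by auto
  have column: "(\<Sum>y\<in>B j. \<phi> j (fst y) * \<phi> j (snd y)) \<le> card (B j) * (if j = p then 1 else c)"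
    if "j < k" for j
  proof -
    have "(\<Sum>y\<in>B j. \<phi> j (fst y) * \<phi> j (snd y)) = (\<Sum>C\<in>Pow {..<j}. \<phi> j C) * (\<Sum>C\<in>Pow {j<..<k}. \<phi> j C)"
      unfolding B_def by (simp add: sum.cartesian_product' sum_product)
    also have "\<dots> \<le> (2 ^ card {..<j} * (if S \<inter> {..<j} = {} then 1 else c))
                  * (2 ^ card {j<..<k} * (if S \<inter> {j<..<k} = {} then 1 else c))"
      unfolding \<phi>_def c_def using assms by (intro mult_mono sum_Pow_parity_power_le sum_nonneg) auto
    also have "\<dots> = card (B j) * ((if S \<inter> {..<j} = {} then 1 else c) * (if S \<inter> {j<..<k} = {} then 1 else c))"
      unfolding B_def by (simp add: card_cartesian_product card_Pow)
    also have "\<dots> \<le> card (B j) * (if j = p then 1 else c)"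
    proof (intro mult_left_mono)
      have "p \<in> S \<inter> {..<j} \<or> p \<in> S \<inter> {j<..<k} \<or> j = p" using \<open>p \<in> S\<close> \<open>p < k\<close> by auto
      then show "(if S \<inter> {..<j} = {} then 1 else c) * (if S \<inter> {j<..<k} = {} then 1 else c)
          \<le> (if j = p then 1 else c)"
        using c mult_left_le[OF c(2) c(1)] by (auto simp: mult_le_one)
    qed simp
    finally show ?thesis .
  qed
  have "(\<Sum>P\<in>triangular_choices k. \<Prod>j<k. \<phi> j (fst (P j)) * \<phi> j (snd (P j)))
      = (\<Prod>j<k. \<Sum>y\<in>B j. \<phi> j (fst y) * \<phi> j (snd y))"
    unfolding triangular_choices_def B_def by (rule prod_sum_PiE[symmetric]) auto
  also have "\<dots> \<le> (\<Prod>j<k. card (B j) * (if j = p then 1 else c))"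
    using column assms unfolding \<phi>_def by (intro prod_mono conjI sum_nonneg) auto
  also have "\<dots> = card (triangular_choices k) * c ^ (k - 1)"
  proof -
    have "(\<Prod>j<k. if j = p then 1 else c) = c ^ (k - 1)"
      using \<open>p < k\<close> by (simp add: prod.If_cases Collect_neg_eq Int_commute Diff_eq[symmetric])
    then show ?thesis
      unfolding triangular_choices_def B_def by (simp add: prod.distrib card_PiE)
  qed
  finally have averaged: "(\<Sum>P\<in>triangular_choices k. \<Prod>j<k. \<phi> j (fst (P j)) * \<phi> j (snd (P j)))
      \<le> card (triangular_choices k) * c ^ (k - 1)" .
  have "(\<Sum>P\<in>triangular_choices k. x ^ message_weight k P S)
      = x ^ card S * (\<Sum>P\<in>triangular_choices k. \<Prod>j<k. \<phi> j (fst (P j)) * \<phi> j (snd (P j)))"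
    unfolding \<phi>_def sum_distrib_left by (intro sum.cong refl power_message_weight assms(1))
  also have "\<dots> \<le> x ^ card S * (card (triangular_choices k) * c ^ (k - 1))"
    using averaged assms(3) by (intro mult_left_mono) auto
  finally show ?thesis unfolding c_def by (simp add: mult_ac)
qed

lemma sum_power_card_Pow:
  fixes x :: "'a::comm_semiring_1"
  assumes "finite A"
  shows "(\<Sum>S\<in>Pow A. x ^ card S) = (1 + x) ^ card A"
  using prod_add[OF assms, of "\<lambda>_. x" "\<lambda>_. 1"] by (simp add: add.commute)

lemma sum_card_light_messages_le:
  fixes x :: real
  assumes "0 < x" "x \<le> 1"
  shows "(\<Sum>P\<in>triangular_choices k. real (card (light_messages k P d)))
     \<le> card (triangular_choices k) * (1 / x) ^ nat \<lceil>d\<rceil> * (1 + x) ^ k * ((1 + x) / 2) ^ (k - 1)"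
proof -
  define D where "D = nat \<lceil>d\<rceil>"
  define M where "M = card (triangular_choices k) * ((1 + x) / 2) ^ (k - 1)"
  have M: "0 \<le> M" using assms unfolding M_def by simp
  have exponential_markov: "of_bool (S \<noteq> {} \<and> real (message_weight k P S) < d)
      \<le> of_bool (S \<noteq> {}) * ((1 / x) ^ D * x ^ message_weight k P S)" for S P
  proof (cases "S \<noteq> {} \<and> real (message_weight k P S) < d")
    case True
    then have "message_weight k P S \<le> D" unfolding D_def by linarith
    then have "x ^ D \<le> x ^ message_weight k P S" using assms by (intro power_decreasing) auto
    then show ?thesis using True assms by (simp add: power_one_over field_simps)
  qed (use assms in auto)
  have "(\<Sum>P\<in>triangular_choices k. real (card (light_messages k P d)))
      = (\<Sum>P\<in>triangular_choices k. \<Sum>S\<in>Pow {..<k}. of_bool (S \<noteq> {} \<and> real (message_weight k P S) < d))"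
    unfolding light_messages_def by (simp add: Collect_conj_eq Int_commute Pow_def)
  also have "\<dots> \<le> (\<Sum>P\<in>triangular_choices k. \<Sum>S\<in>Pow {..<k}.
      of_bool (S \<noteq> {}) * ((1 / x) ^ D * x ^ message_weight k P S))"
    by (intro sum_mono exponential_markov)
  also have "\<dots> = (\<Sum>S\<in>Pow {..<k}. of_bool (S \<noteq> {}) * ((1 / x) ^ D
      * (\<Sum>P\<in>triangular_choices k. x ^ message_weight k P S)))"
    by (subst sum.swap) (simp add: sum_distrib_left)
  also have "\<dots> \<le> (\<Sum>S\<in>Pow {..<k}. (1 / x) ^ D * (M * x ^ card S))"
  proof (intro sum_mono)
    fix S assume "S \<in> Pow {..<k}"
    then show "of_bool (S \<noteq> {}) * ((1 / x) ^ D * (\<Sum>P\<in>triangular_choices k. x ^ message_weight k P S))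
        \<le> (1 / x) ^ D * (M * x ^ card S)"
      using sum_power_message_weight_le[of S k x] assms M unfolding M_def
      by (cases "S = {}") (auto intro!: mult_left_mono simp: mult_ac)
  qed
  also have "\<dots> = (1 / x) ^ D * M * (1 + x) ^ k"
    by (simp only: sum_distrib_left[symmetric] sum_power_card_Pow finite_lessThan card_lessThan mult.assoc)
  finally show ?thesis unfolding D_def M_def by (simp add: mult_ac)
qed

lemma ex_triangular_choice_without_light_messages:
  fixes x :: real
  assumes "0 < x" "x \<le> 1" "(1 / x) ^ nat \<lceil>d\<rceil> * (1 + x) ^ k * ((1 + x) / 2) ^ (k - 1) < 1"
  shows "\<exists>P\<in>triangular_choices k. light_messages k P d = {}"
proof (rule ccontr)
  assume "\<not> ?thesis"
  then have "\<forall>P\<in>triangular_choices k. (1::real) \<le> card (light_messages k P d)"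
    by (auto simp: Suc_le_eq card_gt_0_iff light_messages_def)
  then have "real (card (triangular_choices k)) \<le> (\<Sum>P\<in>triangular_choices k. real (card (light_messages k P d)))"
    using sum_mono[of "triangular_choices k" "\<lambda>_. 1::real"] by simp
  also have "\<dots> \<le> card (triangular_choices k) * ((1 / x) ^ nat \<lceil>d\<rceil> * (1 + x) ^ k * ((1 + x) / 2) ^ (k - 1))"
    using sum_card_light_messages_le[OF assms(1,2)] by (simp add: mult_ac)
  also have "\<dots> < card (triangular_choices k)"
  proof -
    have "(\<lambda>j\<in>{..<k}. ({}, {})) \<in> triangular_choices k"
      unfolding triangular_choices_def by auto
    moreover have "finite (triangular_choices k)"
      unfolding triangular_choices_def by (auto intro: finite_PiE)
    ultimately have "0 < card (triangular_choices k)" by (auto simp: card_gt_0_iff)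
    then show ?thesis using assms(3) by simp
  qed
  finally show False by simp
qed

lemma eventually_light_bound_less_1:
  "\<forall>\<^sub>F k in sequentially. \<forall>d \<le> real k / 5. (10::real) ^ nat \<lceil>d\<rceil> * (11/10) ^ k * (11/20) ^ (k - 1) < 1"
proof -
  define q :: real where "q = 10 powr (1/5)"
  define r where "r = q * (121/200)"
  have "q ^ 5 = 10" unfolding q_def by (simp add: powr_power)
  then have "r ^ 5 < 1 ^ 5" unfolding r_def power_mult_distrib by (simp add: power_divide)
  then have "r < 1" by (rule power_less_imp_less_base) simp
  moreover have r: "0 \<le> r" unfolding r_def q_def by simp
  ultimately have "\<forall>\<^sub>F k in sequentially. r ^ k < 11/200"
    by (intro order_tendstoD(2)[OF LIMSEQ_power_zero]) auto
  then show ?thesis using eventually_ge_at_top[of 1]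
  proof eventually_elim
    case (elim k)
    show ?case
    proof (intro allI impI)
      fix d :: real assume "d \<le> real k / 5"
      then have "real (nat \<lceil>d\<rceil>) \<le> real k / 5 + 1" by linarith
      then have "(10::real) ^ nat \<lceil>d\<rceil> \<le> 10 powr (real k / 5 + 1)"
        by (simp add: powr_realpow[symmetric])
      also have "\<dots> = 10 * q ^ k" unfolding q_def by (simp add: powr_add powr_power mult_ac)
      finally have "(10::real) ^ nat \<lceil>d\<rceil> * (11/10) ^ k * (11/20) ^ (k - 1)
          \<le> 10 * q ^ k * (11/10) ^ k * (11/20) ^ (k - 1)"
        by (intro mult_right_mono) auto
      also have "\<dots> = 200/11 * (q * (11/10) * (11/20)) ^ k"
      proof -
        have "(11/20::real) ^ (k - 1) = (11/20) ^ k * (20/11)" using elim(2) by (cases k) auto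
        then show ?thesis unfolding power_mult_distrib by (simp add: field_simps)
      qed
      also have "\<dots> = 200/11 * r ^ k" unfolding r_def by (simp add: mult_ac)
      also have "\<dots> < 1" using elim(1) by simp
      finally show "(10::real) ^ nat \<lceil>d\<rceil> * (11/10) ^ k * (11/20) ^ (k - 1) < 1" .
    qed
  qed
qed

theorem proposition3:
  fixes \<delta> :: real
  assumes "0 \<le> \<delta>" and "\<delta> \<le> 1/2" and "H \<delta> < 1/3"
  shows "\<exists>K. \<forall>k\<ge>K. \<exists>G. generator_matrix G k (3*k) \<and> three_CIS G k (3*k)
           \<and> min_dist_ge (code G k (3*k)) (3*k) (3 * \<delta> * real k)"
proof -
  have "\<delta> < 1/15" using assms by (rule less_one_fifteenth_if_H_less)
  then have distance_small: "3 * \<delta> * real k \<le> real k / 5" for k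
    using mult_right_mono[of "3 * \<delta>" "1/5" "real k"] by simp
  obtain K where K: "\<And>k d. K \<le> k \<Longrightarrow> d \<le> real k / 5 \<Longrightarrow>
      (10::real) ^ nat \<lceil>d\<rceil> * (11/10) ^ k * (11/20) ^ (k - 1) < 1"
    using eventually_light_bound_less_1 unfolding eventually_sequentially by blast
  show ?thesis
  proof (intro exI[of _ K] allI impI)
    fix k assume "K \<le> k"
    then have "(1 / (1/10)) ^ nat \<lceil>3 * \<delta> * real k\<rceil> * (1 + 1/10) ^ k * ((1 + 1/10) / 2) ^ (k - 1) < (1::real)"
      using K distance_small by simp
    then obtain P where "P \<in> triangular_choices k" "light_messages k P (3 * \<delta> * real k) = {}"
      using ex_triangular_choice_without_light_messages[of "1/10"] by force
    then show "\<exists>G. generator_matrix G k (3*k) \<and> three_CIS G k (3*k)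
        \<and> min_dist_ge (code G k (3*k)) (3*k) (3 * \<delta> * real k)"
      using generator_matrix_triangular_generator three_CIS_triangular_generator
        min_dist_ge_if_no_light_messages by blast
  qed
qed

end
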